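(* Let $\mathcal F$ be a filtration sequence, $E=(E_{m,n})_{m,n\in\mathbb N}$ a nonnegative process adapted to $\mathcal F$, and $r$ an extended integer sequence. Then the following two conditions are equivalent: (a) for every $\tau=(\tau_m)_{m\in\mathbb N}\in\mathcal T_{\mathrm{fin}}(r,\mathcal F,\mathcal P)$, $\limsup_{m\to\infty}\sup_{P\in\mathcal P}\mathbb E_P[E_{m,\tau_m}]\le 1$; (b) $\limsup_{m\to\infty}\sup_{\tau\in\mathcal T_{\mathrm{fin}}(r_m,\mathcal F_{m,\bullet},\mathcal P)}\sup_{P\in\mathcal P}\mathbb E_P[E_{m,\tau}]\le 1$. Moreover, if they hold, there exists $m_0\in\mathbb N$ such that $\sup_{P\in\mathcal P}\mathbb E_P[E_{m,n}]<\infty$ for all $m\ge m_0$ and all $n\in\mathbb N$ with $n\le r_m$; in particular such $E_{m,n}$ are $P$-integrable for every $P\in\mathcal P$.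
   Context: $(\Omega,\mathcal A)$ is a measurable space and $\mathcal P$ a set of probability measures on it. $\mathbb N=\{0,1,\dots\}$; an extended integer is an element of $\mathbb N\cup\{\infty\}$. Nonnegative random variables take values in $[0,\infty]$ with $\mathbb E_P[X]:=\infty$ if not $P$-integrable. A filtration sequence is a family $(\mathcal F_{m,n})_{m,n\in\mathbb N}$ of sub-$\sigma$-algebras of $\mathcal A$ such that each $\mathcal F_{m,\bullet}$ is a filtration; adapted means $E_{m,n}$ is $\mathcal F_{m,n}$-measurable. For a filtration $\mathcal G$ and $\rho\in\mathbb N\cup\{\infty\}$, $\mathcal T(\rho,\mathcal G,\mathcal P)$ is the set of $\mathcal G$-stopping times $\tau$ (values in $\mathbb N\cup\{\infty\}$) with $P[\tau\le\rho]=1$ for all $P\in\mathcal P$, and $\mathcal T_{\mathrm{fin}}(\rho,\mathcal G,\mathcal P)$ is its subset of stopping times with $\tau(\omega)<\infty$ for every $\omega\in\Omega$. $\mathcal T_{\mathrm{fin}}(r,\mathcal F,\mathcal P)$ is the set of sequences $(\tau_m)_{m}$ with $\tau_m\in\mathcal T_{\mathrm{fin}}(r_m,\mathcal F_{m,\bullet},\mathcal P)$ for all $m$. *)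

theory Defs
  imports "HOL-Probability.Probability"
begin

definition filtration_sequence :: "'a measure \<Rightarrow> (nat \<Rightarrow> nat \<Rightarrow> 'a measure) \<Rightarrow> bool" where
  "filtration_sequence M F \<longleftrightarrow>
     (\<forall>m. filtration (space M) (F m)) \<and> (\<forall>m n. sets (F m n) \<subseteq> sets M)"

text \<open>T_fin(rho, G, Ps): G-stopping times that are finite everywhere (hence nat-valued)
  and satisfy P[tau <= rho] = 1 for all P in Ps.\<close>
definition Tfin :: "enat \<Rightarrow> (nat \<Rightarrow> 'a measure) \<Rightarrow> 'a measure set \<Rightarrow> ('a \<Rightarrow> nat) set" where
  "Tfin \<rho> G Ps = {\<tau>. stopping_time G \<tau> \<and>
      (\<forall>P\<in>Ps. emeasure P {\<omega> \<in> space P. enat (\<tau> \<omega>) \<le> \<rho>} = 1)}"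

end

theory Submission
  imports Defs
begin

text \<open>Condition (b) trivially implies (a). Conversely, if the limsup in (b) exceeded 1,
  one could pick for infinitely many m a stopping time nearly attaining the m-th supremum and
  thereby violate (a). Once (b) holds, the m-th supremum is eventually finite, and since the
  constant stopping time n is admissible whenever n \<le> r m, this bounds the expectations of
  E m n uniformly in P.\<close>

lemma Tfin_const:
  assumes "\<And>P. P \<in> Ps \<Longrightarrow> prob_space P" and "enat n \<le> \<rho>"
  shows "(\<lambda>_. n) \<in> Tfin \<rho> G Ps"
  using assms by (simp add: Tfin_def stopping_time_const prob_space.emeasure_space_1)

lemma Tfin_nonempty:
  assumes "\<And>P. P \<in> Ps \<Longrightarrow> prob_space P"
  shows "Tfin \<rho> G Ps \<noteq> {}"
  using Tfin_const[OF assms, where n=0] by (auto simp: zero_enat_def[symmetric])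

lemma SUP_nn_integral_le_SUP_Tfin:
  assumes "\<And>P. P \<in> Ps \<Longrightarrow> prob_space P" and "enat n \<le> \<rho>"
  shows "(SUP P\<in>Ps. \<integral>\<^sup>+ \<omega>. f n \<omega> \<partial>P)
    \<le> (SUP \<tau>\<in>Tfin \<rho> G Ps. SUP P\<in>Ps. \<integral>\<^sup>+ \<omega>. f (\<tau> \<omega>) \<omega> \<partial>P)"
  using SUP_upper[OF Tfin_const[OF assms],
      where f="\<lambda>\<tau>. SUP P\<in>Ps. \<integral>\<^sup>+ \<omega>. f (\<tau> \<omega>) \<omega> \<partial>P"] by simp

lemma limsup_SUP_le_iff:
  fixes g :: "nat \<Rightarrow> 'b \<Rightarrow> 'c :: {complete_linorder, dense_linorder}"
  assumes T: "\<And>m. T m \<noteq> {}"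
  shows "(\<forall>\<tau>. (\<forall>m. \<tau> m \<in> T m) \<longrightarrow> limsup (\<lambda>m. g m (\<tau> m)) \<le> c)
    \<longleftrightarrow> limsup (\<lambda>m. SUP t\<in>T m. g m t) \<le> c"
    (is "?pointwise \<longleftrightarrow> limsup ?S \<le> c")
proof
  assume "limsup ?S \<le> c"
  moreover have "limsup (\<lambda>m. g m (\<tau> m)) \<le> limsup ?S" if "\<forall>m. \<tau> m \<in> T m" for \<tau>
    using that by (intro Limsup_mono always_eventually allI SUP_upper) auto
  ultimately show ?pointwise
    by (meson order_trans)
next
  assume pointwise: ?pointwise
  show "limsup ?S \<le> c"
    unfolding Limsup_le_iff
  proof (intro allI impI)
    fix y assume "c < y"
    then obtain z where "c < z" "z < y"
      using dense by blast
    have "\<forall>m. \<exists>t\<in>T m. z < ?S m \<longrightarrow> z < g m t"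
      using T by (metis ex_in_conv less_SUP_iff)
    then obtain \<tau> where \<tau>: "\<And>m. \<tau> m \<in> T m" "\<And>m. z < ?S m \<Longrightarrow> z < g m (\<tau> m)"
      by metis
    have "limsup (\<lambda>m. g m (\<tau> m)) < z"
      using pointwise \<tau>(1) \<open>c < z\<close> by (blast intro: le_less_trans)
    then have "eventually (\<lambda>m. g m (\<tau> m) < z) sequentially"
      by (rule Limsup_lessD)
    then show "eventually (\<lambda>m. ?S m < y) sequentially"
      by eventually_elim (use \<tau>(2) \<open>z < y\<close> in \<open>meson less_asym not_less le_less_trans\<close>)
  qed
qed

lemma filtration_sequence_measurable:
  assumes "filtration_sequence M F" and "sets P = sets M" and "f \<in> measurable (F m n) N"
  shows "f \<in> measurable P N"
proof (rule measurable_from_subalg)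
  have "space (F m n) = space M"
    using assms(1) by (simp add: filtration_sequence_def filtration_def)
  then show "subalgebra P (F m n)"
    using assms(1,2) sets_eq_imp_space_eq[OF assms(2)]
    by (auto simp: subalgebra_def filtration_sequence_def)
qed fact

lemma integrable_enn2real_of_nn_integral_finite:
  assumes f: "f \<in> borel_measurable M" and fin: "(\<integral>\<^sup>+ x. f x \<partial>M) < \<infinity>"
  shows "integrable M (\<lambda>x. enn2real (f x))"
proof (rule integrableI_bounded)
  have "(\<integral>\<^sup>+ x. ennreal (norm (enn2real (f x))) \<partial>M) \<le> (\<integral>\<^sup>+ x. f x \<partial>M)"
    by (intro nn_integral_mono) (simp add: ennreal_enn2real_if)
  then show "(\<integral>\<^sup>+ x. ennreal (norm (enn2real (f x))) \<partial>M) < \<infinity>"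
    using fin by (rule le_less_trans)
qed (use f in simp)

theorem mainTheorem3:
  fixes M :: "'a measure" and Ps :: "'a measure set"
    and F :: "nat \<Rightarrow> nat \<Rightarrow> 'a measure"
    and E :: "nat \<Rightarrow> nat \<Rightarrow> 'a \<Rightarrow> ennreal"
    and r :: "nat \<Rightarrow> enat"
  assumes Ps: "\<And>P. P \<in> Ps \<Longrightarrow> prob_space P \<and> sets P = sets M"
    and F: "filtration_sequence M F"
    and adapted: "\<And>m n. E m n \<in> borel_measurable (F m n)"
  shows "((\<forall>\<tau>. (\<forall>m. \<tau> m \<in> Tfin (r m) (F m) Ps) \<longrightarrow>
            limsup (\<lambda>m. SUP P\<in>Ps. \<integral>\<^sup>+ \<omega>. E m (\<tau> m \<omega>) \<omega> \<partial>P) \<le> 1)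
         \<longleftrightarrow>
         limsup (\<lambda>m. SUP \<tau>\<in>Tfin (r m) (F m) Ps. SUP P\<in>Ps. \<integral>\<^sup>+ \<omega>. E m (\<tau> \<omega>) \<omega> \<partial>P) \<le> 1)
       \<and>
       ((\<forall>\<tau>. (\<forall>m. \<tau> m \<in> Tfin (r m) (F m) Ps) \<longrightarrow>
            limsup (\<lambda>m. SUP P\<in>Ps. \<integral>\<^sup>+ \<omega>. E m (\<tau> m \<omega>) \<omega> \<partial>P) \<le> 1)
        \<longrightarrow> (\<exists>m0. \<forall>m\<ge>m0. \<forall>n. enat n \<le> r m \<longrightarrow>
              (SUP P\<in>Ps. \<integral>\<^sup>+ \<omega>. E m n \<omega> \<partial>P) < \<infinity> \<and>
              (\<forall>P\<in>Ps. integrable P (\<lambda>\<omega>. enn2real (E m n \<omega>)) \<and>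
                       (AE \<omega> in P. E m n \<omega> < \<infinity>))))"
    (is "(?a \<longleftrightarrow> limsup ?S \<le> 1) \<and> (?a \<longrightarrow> ?finite)")
proof -
  have equiv: "?a \<longleftrightarrow> limsup ?S \<le> 1"
    by (rule limsup_SUP_le_iff) (use Ps Tfin_nonempty in blast)
  have ?finite if "limsup ?S \<le> 1"
  proof -
    have "eventually (\<lambda>m. ?S m < \<infinity>) sequentially"
      using that by (intro Limsup_lessD) (simp add: le_less_trans)
    then obtain m0 where m0: "\<And>m. m \<ge> m0 \<Longrightarrow> ?S m < \<infinity>"
      by (auto simp: eventually_sequentially)
    have sup_finite: "(SUP P\<in>Ps. \<integral>\<^sup>+ \<omega>. E m n \<omega> \<partial>P) < \<infinity>"
      if "m \<ge> m0" "enat n \<le> r m" for m n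
      using SUP_nn_integral_le_SUP_Tfin[where f="E m" and G="F m"] Ps that m0
      by (meson le_less_trans)
    have nn_finite: "(\<integral>\<^sup>+ \<omega>. E m n \<omega> \<partial>P) < \<infinity>"
      if "m \<ge> m0" "enat n \<le> r m" "P \<in> Ps" for m n P
      using SUP_upper[OF that(3)] sup_finite[OF that(1,2)] by (rule le_less_trans)
    have meas: "E m n \<in> borel_measurable P" if "P \<in> Ps" for m n P
      using filtration_sequence_measurable[OF F _ adapted] Ps that by blast
    have "integrable P (\<lambda>\<omega>. enn2real (E m n \<omega>)) \<and> (AE \<omega> in P. E m n \<omega> < \<infinity>)"
      if "m \<ge> m0" "enat n \<le> r m" "P \<in> Ps" for m n P
      using nn_finite[OF that] meas[OF that(3)] nn_integral_PInf_AE[OF meas[OF that(3)]]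
      by (simp add: integrable_enn2real_of_nn_integral_finite top.not_eq_extremum)
    with sup_finite show ?thesis
      by blast
  qed
  with equiv show ?thesis
    by blast
qed

end
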